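(* Let $\ell$ be a nondegenerate Hermitian form on a complex $n$-dimensional space $W$, $A$ an $\ell$-self-adjoint antilinear operator, and $\lambda>0$ such that $\lambda^2$ is an eigenvalue of $A^2$. Let $W_\lambda^{(m)}=\ker(A^2-\lambda^2I)^m$ and let $s_1$ be the least positive integer with $W_\lambda^{(s_1)}=W_\lambda^{(n)}$. Then there exists a vector $v\in W_\lambda^{(n)}$ (which can be taken with $(A-\lambda I)^{s_1}v=0$) such that $$V=\mathrm{span}_{\mathbb C}\{v,(A-\lambda I)v,\dots,(A-\lambda I)^{s_1-1}v\}$$ is an $s_1$-dimensional $A$-invariant subspace on which $\ell$ is nondegenerate.
   Context: An antilinear operator satisfies $A(zv+w)=\bar zAv+Aw$; $\ell$ is linear in the first argument and conjugate-linear in the second; $A$ is $\ell$-self-adjoint if $\ell(Av,w)=\ell(Aw,v)$ for all $v,w$. *)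

theory Defs
  imports "HOL-Analysis.Analysis"
begin

text \<open>The complex n-dimensional space W is modelled as complex ^ 'n (n = CARD('n)),
  with complex scalar multiplication *s; complex spans/dimensions are vec.span / vec.dim.\<close>

definition antilinear :: "(complex^'n \<Rightarrow> complex^'n) \<Rightarrow> bool" where
  "antilinear A \<longleftrightarrow> (\<forall>z v w. A (z *s v + w) = cnj z *s A v + A w)"

definition hermitian_form :: "(complex^'n \<Rightarrow> complex^'n \<Rightarrow> complex) \<Rightarrow> bool" where
  "hermitian_form l \<longleftrightarrow>
     (\<forall>z u v w. l (z *s u + v) w = z * l u w + l v w) \<and>
     (\<forall>z u v w. l w (z *s u + v) = cnj z * l w u + l w v) \<and>
     (\<forall>v w. l v w = cnj (l w v))"

definition nondegenerate_on :: "(complex^'n \<Rightarrow> complex^'n \<Rightarrow> complex) \<Rightarrow> (complex^'n) set \<Rightarrow> bool" where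
  "nondegenerate_on l V \<longleftrightarrow> (\<forall>x\<in>V. (\<forall>y\<in>V. l x y = 0) \<longrightarrow> x = 0)"

definition self_adjoint_wrt :: "(complex^'n \<Rightarrow> complex^'n \<Rightarrow> complex) \<Rightarrow> (complex^'n \<Rightarrow> complex^'n) \<Rightarrow> bool" where
  "self_adjoint_wrt l A \<longleftrightarrow> (\<forall>v w. l (A v) w = l (A w) v)"

definition gen_eigenspace :: "(complex^'n \<Rightarrow> complex^'n) \<Rightarrow> real \<Rightarrow> nat \<Rightarrow> (complex^'n) set" where
  "gen_eigenspace A lam m =
     {v. ((\<lambda>x. A (A x) - complex_of_real (lam^2) *s x) ^^ m) v = 0}"

definition shiftop :: "(complex^'n \<Rightarrow> complex^'n) \<Rightarrow> real \<Rightarrow> complex^'n \<Rightarrow> complex^'n" where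
  "shiftop A lam = (\<lambda>x. A x - complex_of_real lam *s x)"

end

theory Submission
  imports Defs
begin

(* With B = A - lam and C = A + lam, which are real-linear, commute and compose to
   A^2 - lam^2, the generalized eigenspace ker (A^2 - lam^2)^n splits into the root spaces
   of B and of C, and multiplication by i exchanges the two.  Self-adjointness of A makes
   B and C adjoint for Re l, which forces the two root spaces to be Re l-orthogonal; hence l
   is real on the root space R of B, B is l-self-adjoint there, and Re l is nondegenerate
   on R.  By the choice of s, B^s vanishes on R but B^(s-1) does not, so polarization gives
   v in R with l (B^(s-1) v) v \<noteq> 0.  The Gram matrix l (B^j v) (B^k v) = l v (B^(j+k) v)
   is then antitriangular with nonzero antidiagonal, so v, B v, ..., B^(s-1) v are
   independent and span a space on which l is nondegenerate; it is A-invariant because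
   A = B + lam. *)

lemma funpow_zero_fixed:
  fixes f :: "'a::zero \<Rightarrow> 'a"
  shows "f 0 = 0 \<Longrightarrow> (f ^^ n) 0 = 0"
  by (induction n) simp_all

lemma funpow_eq_0_mono:
  fixes f :: "'a::zero \<Rightarrow> 'a"
  assumes "f 0 = 0" "(f ^^ m) x = 0" "m \<le> m'"
  shows "(f ^^ m') x = 0"
proof -
  have "(f ^^ m') x = (f ^^ (m' - m)) ((f ^^ m) x)"
    using \<open>m \<le> m'\<close> by (metis funpow_add le_add_diff_inverse2 comp_apply)
  with assms show ?thesis by (simp add: funpow_zero_fixed)
qed

lemma funpow_commute_apply:
  assumes "\<And>x. f (g x) = g (f x)"
  shows "(f ^^ n) (g x) = g ((f ^^ n) x)"
  using assms by (induction n) auto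

lemma funpow_funpow_commute:
  assumes "\<And>x. f (g x) = g (f x)"
  shows "(f ^^ m) ((g ^^ n) x) = (g ^^ n) ((f ^^ m) x)"
  by (induction n arbitrary: x) (simp_all add: funpow_commute_apply[where f = f and g = g, OF assms])

lemma funpow_comp_commuting:
  assumes "\<And>x. f (g x) = g (f x)"
  shows "((\<lambda>x. f (g x)) ^^ n) x = (f ^^ n) ((g ^^ n) x)"
proof (induction n arbitrary: x)
  case (Suc n)
  then show ?case
    using funpow_funpow_commute[where f = f and g = g, OF assms, of n 1]
    by (simp add: funpow_swap1[symmetric])
qed simp

context vector_space
begin

lemma linear_funpow:
  assumes "Vector_Spaces.linear scale scale f"
  shows "Vector_Spaces.linear scale scale (f ^^ n)"
proof (induction n)
  case 0
  show ?case by (simp add: Vector_Spaces.linear_iff vector_space_axioms)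
next
  case (Suc n)
  show ?case
    using Vector_Spaces.linear_compose[OF Suc assms] by (simp only: funpow.simps(2))
qed

end

context finite_dimensional_vector_space
begin

lemma increasing_subspaces_stabilize:
  assumes "\<And>j. subspace (S j)" "\<And>j. S j \<subseteq> S (Suc j)"
  obtains i where "i \<le> dimension" "S (Suc i) = S i"
proof -
  have "(\<exists>i<j. S (Suc i) = S i) \<or> j \<le> dim (S j)" for j
  proof (induction j)
    case (Suc j)
    show ?case
    proof (cases "S (Suc j) = S j")
      case False
      with assms(2) have "S j \<subset> S (Suc j)" by auto
      then have "dim (S j) < dim (S (Suc j))"
        using dim_psubset[of "S j" "S (Suc j)"] span_eq_iff[THEN iffD2, OF assms(1)] by simp
      with Suc show ?thesis by (auto intro: less_SucI)
    qed auto
  qed simp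
  from this[of "Suc dimension"] dim_subset_UNIV[of "S (Suc dimension)"] that
  show thesis by (auto simp: less_Suc_eq_le)
qed

lemma decreasing_subspaces_stabilize:
  assumes "\<And>j. subspace (S j)" "\<And>j. S (Suc j) \<subseteq> S j"
  obtains i where "i \<le> dimension" "S (Suc i) = S i"
proof -
  have "(\<exists>i<j. S (Suc i) = S i) \<or> j + dim (S j) \<le> dimension" for j
  proof (induction j)
    case (Suc j)
    show ?case
    proof (cases "S (Suc j) = S j")
      case False
      with assms(2) have "S (Suc j) \<subset> S j" by auto
      then have "dim (S (Suc j)) < dim (S j)"
        using dim_psubset[of "S (Suc j)" "S j"] span_eq_iff[THEN iffD2, OF assms(1)] by simp
      with Suc show ?thesis by (auto intro: less_SucI)
    qed auto
  qed (simp add: dim_subset_UNIV)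
  from this[of "Suc dimension"] that show thesis by (auto simp: less_Suc_eq_le)
qed

lemma kernel_funpow_stable:
  assumes lf: "Vector_Spaces.linear scale scale f" and "dimension \<le> K" "(f ^^ m) x = 0"
  shows "(f ^^ K) x = 0"
proof -
  have hom: "module_hom scale scale (f ^^ j)" for j
    using linear_funpow[OF lf] by (simp add: linear_iff_module_hom)
  have f0: "f 0 = 0"
    using module_hom.zero[OF hom[of 1]] by simp
  obtain i where i: "i \<le> dimension" "{x. (f ^^ Suc i) x = 0} = {x. (f ^^ i) x = 0}"
  proof (rule increasing_subspaces_stabilize)
    show "subspace {x. (f ^^ j) x = 0}" for j
      using module_hom.subspace_kernel[OF hom] .
    show "{x. (f ^^ j) x = 0} \<subseteq> {x. (f ^^ Suc j) x = 0}" for j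
      using funpow_eq_0_mono[where f = f and m = j and m' = "Suc j", OF f0] by auto
  qed
  have stable: "(f ^^ (i + d)) y = 0 \<Longrightarrow> (f ^^ i) y = 0" for d y
  proof (induction d arbitrary: y)
    case (Suc d)
    have "(f ^^ (i + d)) (f y) = 0"
      using Suc.prems by (simp only: add_Suc_right funpow_Suc_right comp_apply)
    then have "(f ^^ Suc i) y = 0"
      using Suc.IH by (simp only: funpow_Suc_right comp_apply)
    with i(2) show ?case by blast
  qed simp
  have "i \<le> max m K"
    using i(1) assms(2) by simp
  have "(f ^^ max m K) x = 0"
    using funpow_eq_0_mono[where f = f, OF f0 assms(3)] by simp
  then have "(f ^^ (i + (max m K - i))) x = 0"
    using \<open>i \<le> max m K\<close> by simp
  then have "(f ^^ i) x = 0" by (rule stable)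
  then show ?thesis
    using funpow_eq_0_mono[where f = f and m = i and m' = K, OF f0] i(1) assms(2) by simp
qed

lemma fitting_decomposition:
  assumes lf: "Vector_Spaces.linear scale scale f" and "dimension \<le> K"
  obtains u y where "(f ^^ K) u = 0" "w = u + (f ^^ K) y"
proof -
  have hom: "module_hom scale scale (f ^^ j)" for j
    using linear_funpow[OF lf] by (simp add: linear_iff_module_hom)
  obtain i where i: "i \<le> dimension" "range (f ^^ Suc i) = range (f ^^ i)"
  proof (rule decreasing_subspaces_stabilize)
    show "subspace (range (f ^^ j))" for j
      using module_hom.subspace_image[OF hom subspace_UNIV] .
    show "range (f ^^ Suc j) \<subseteq> range (f ^^ j)" for j
      by (auto simp: funpow_Suc_right simp del: funpow.simps)
  qed
  have stable: "range (f ^^ (i + d)) = range (f ^^ i)" for d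
  proof (induction d)
    case (Suc d)
    have "range (f ^^ (i + Suc d)) = f ` range (f ^^ (i + d))"
      by (simp add: image_comp)
    also have "\<dots> = range (f ^^ Suc i)"
      using Suc by (simp add: image_comp)
    finally show ?case using i(2) by simp
  qed simp
  have "range (f ^^ (K + K)) = range (f ^^ K)"
    using stable[of "K + K - i"] stable[of "K - i"] i(1) assms(2) by simp
  then have "(f ^^ K) w \<in> range (f ^^ (K + K))" by simp
  then obtain y where "(f ^^ K) w = (f ^^ (K + K)) y" by blast
  then have y: "(f ^^ K) w = (f ^^ K) ((f ^^ K) y)" by (simp add: funpow_add)
  have "(f ^^ K) (w - (f ^^ K) y) = 0"
    using module_hom.diff[OF hom] y by simp
  with that show thesis by simp
qed

end

lemma scaleR_vec_eq_complex_smult: "r *\<^sub>R (x :: complex ^ 'n) = complex_of_real r *s x"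
  unfolding vec_eq_iff vector_scaleR_component vector_smult_component
  by (simp add: scaleR_conv_of_real)

locale hermitian =
  fixes l :: "complex ^ 'n \<Rightarrow> complex ^ 'n \<Rightarrow> complex"
  assumes hermitian_form: "hermitian_form l"
begin

lemma l_add_left: "l (u + v) w = l u w + l v w"
  using hermitian_form unfolding hermitian_form_def by (metis vec.scale_one mult_1)

lemma l_scale_left: "l (z *s u) w = z * l u w"
  using hermitian_form unfolding hermitian_form_def
  by (metis add.right_neutral l_add_left add_cancel_right_right)

lemma l_add_right: "l w (u + v) = l w u + l w v"
  using hermitian_form unfolding hermitian_form_def by (metis vec.scale_one mult_1 complex_cnj_one)

lemma l_scale_right: "l w (z *s u) = cnj z * l w u"
  using hermitian_form unfolding hermitian_form_def
  by (metis add.right_neutral l_add_right add_cancel_right_right)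

lemma l_cnj_commute: "l v w = cnj (l w v)"
  using hermitian_form unfolding hermitian_form_def by blast

lemma Re_l_commute: "Re (l v w) = Re (l w v)"
  by (subst l_cnj_commute) simp

lemma l_zero_left [simp]: "l 0 w = 0"
  using l_add_left[of 0 0 w] by simp

lemma l_zero_right [simp]: "l w 0 = 0"
  using l_add_right[of w 0 0] by simp

lemma l_diff_left: "l (u - v) w = l u w - l v w"
  using l_add_left[of "u - v" v w] by simp

lemma l_diff_right: "l w (u - v) = l w u - l w v"
  using l_add_right[of w "u - v" v] by simp

lemma l_sum_left: "l (\<Sum>i\<in>I. f i) w = (\<Sum>i\<in>I. l (f i) w)"
  by (induction I rule: infinite_finite_induct) (simp_all add: l_add_left)

context
  fixes s :: nat and x :: "nat \<Rightarrow> complex ^ 'n"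
  assumes below: "\<And>j k. s \<le> j + k \<Longrightarrow> l (x j) (x k) = 0"
    and antidiag: "\<And>j. j < s \<Longrightarrow> l (x j) (x (s - 1 - j)) \<noteq> 0"
begin

lemma antitriangular_gram_coeffs_zero:
  assumes orth: "\<And>k. k < s \<Longrightarrow> l (\<Sum>j<s. a j *s x j) (x k) = 0" and "j < s"
  shows "a j = 0"
proof (rule ccontr)
  assume "a j \<noteq> 0"
  define j0 where "j0 = (LEAST j. j < s \<and> a j \<noteq> 0)"
  have j0: "j0 < s" "a j0 \<noteq> 0"
    using LeastI[of "\<lambda>j. j < s \<and> a j \<noteq> 0" j] \<open>j < s\<close> \<open>a j \<noteq> 0\<close> by (auto simp: j0_def)
  have before_j0: "a i = 0" if "i < j0" for i
    using not_less_Least[of i "\<lambda>j. j < s \<and> a j \<noteq> 0"] that j0(1) by (auto simp: j0_def)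
  define k0 where "k0 = s - 1 - j0"
  have "a i * l (x i) (x k0) = (if i = j0 then a j0 * l (x j0) (x k0) else 0)" for i
  proof (cases "i < j0")
    case False
    show ?thesis
    proof (cases "i = j0")
      case False
      with \<open>\<not> i < j0\<close> j0(1) have "s \<le> i + k0" by (simp add: k0_def)
      with False show ?thesis by (simp add: below)
    qed simp
  qed (simp add: before_j0)
  then have "l (\<Sum>j<s. a j *s x j) (x k0) = (\<Sum>i<s. if i = j0 then a j0 * l (x j0) (x k0) else 0)"
    by (simp add: l_sum_left l_scale_left)
  also have "\<dots> = a j0 * l (x j0) (x k0)"
    using j0(1) by simp
  finally have "l (\<Sum>j<s. a j *s x j) (x k0) = a j0 * l (x j0) (x k0)" .
  moreover have "k0 < s"
    using j0(1) by (simp add: k0_def)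
  ultimately show False
    using orth[of k0] antidiag[OF j0(1)] j0(2) by (simp add: k0_def)
qed

lemma antitriangular_gram_inj_on: "inj_on x {..<s}"
proof (rule inj_onI, rule ccontr)
  fix i j assume "i \<in> {..<s}" "j \<in> {..<s}" "x i = x j" "i \<noteq> j"
  define a where "a t = (if t = i then 1 else if t = j then -1 else 0 :: complex)" for t
  have "(\<Sum>t<s. a t *s x t) = (\<Sum>t<s. (if t = i then x i else 0) - (if t = j then x j else 0))"
    using \<open>i \<noteq> j\<close> by (intro sum.cong) (auto simp: a_def)
  also have "\<dots> = 0"
    using \<open>i \<in> {..<s}\<close> \<open>j \<in> {..<s}\<close> \<open>x i = x j\<close> by (simp add: sum_subtractf)
  finally have "a i = 0"
    using antitriangular_gram_coeffs_zero[of a i] \<open>i \<in> {..<s}\<close> by simp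
  then show False by (simp add: a_def)
qed

lemma antitriangular_gram_span_eq: "vec.span (x ` {..<s}) = range (\<lambda>c. \<Sum>j<s. c (x j) *s x j)"
  by (simp add: vec.span_finite sum.reindex[OF antitriangular_gram_inj_on])

lemma antitriangular_gram_dim: "vec.dim (vec.span (x ` {..<s})) = s"
proof -
  note inj = antitriangular_gram_inj_on
  have "vec.independent (x ` {..<s})"
    unfolding vec.independent_explicit
  proof (intro conjI allI impI ballI)
    fix c y assume "(\<Sum>v\<in>x ` {..<s}. c v *s v) = 0" "y \<in> x ` {..<s}"
    then show "c y = 0"
      using antitriangular_gram_coeffs_zero[of "\<lambda>j. c (x j)"] by (auto simp: sum.reindex[OF inj])
  qed simp
  then show ?thesis
    using card_image[OF inj] by (simp add: vec.dim_eq_card_independent)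
qed

lemma antitriangular_gram_nondegenerate: "nondegenerate_on l (vec.span (x ` {..<s}))"
  unfolding nondegenerate_on_def
proof (intro ballI impI)
  fix y assume "y \<in> vec.span (x ` {..<s})" and orth: "\<forall>z\<in>vec.span (x ` {..<s}). l y z = 0"
  then obtain c where y: "y = (\<Sum>j<s. c (x j) *s x j)"
    using antitriangular_gram_span_eq by auto
  have "l y (x k) = 0" if "k < s" for k
    using orth vec.span_base[of "x k" "x ` {..<s}"] that by simp
  then have "c (x j) = 0" if "j < s" for j
    using antitriangular_gram_coeffs_zero[of "\<lambda>j. c (x j)" j] that y by simp
  then show "y = 0"
    using y by simp
qed

end

end

locale selfadjoint_antilinear = hermitian +
  fixes A :: "complex ^ 'n \<Rightarrow> complex ^ 'n" and lam :: real
  assumes antilinear: "antilinear A"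
    and self_adjoint: "self_adjoint_wrt l A"
    and nondegenerate: "nondegenerate_on l UNIV"
    and lam_pos: "0 < lam"
begin

lemma A_add: "A (v + w) = A v + A w"
  using antilinear unfolding antilinear_def by (metis vec.scale_one complex_cnj_one)

lemma A_zero [simp]: "A 0 = 0"
  using A_add[of 0 0] by simp

lemma A_scale: "A (z *s v) = cnj z *s A v"
  using antilinear unfolding antilinear_def by (metis A_zero add.right_neutral)

lemma linear_A: "linear A"
  by (rule linearI) (simp_all add: A_add A_scale scaleR_vec_eq_complex_smult)

lemma A_diff: "A (v - w) = A v - A w"
  using linear_diff[OF linear_A] .

lemma l_A_commute: "l (A x) y = l (A y) x"
  using self_adjoint unfolding self_adjoint_wrt_def by blast

definition B :: "complex ^ 'n \<Rightarrow> complex ^ 'n" where "B = shiftop A lam"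
definition C :: "complex ^ 'n \<Rightarrow> complex ^ 'n" where "C x = A x + complex_of_real lam *s x"
definition T :: "complex ^ 'n \<Rightarrow> complex ^ 'n"
  where "T x = A (A x) - complex_of_real (lam\<^sup>2) *s x"

lemma B_apply: "B x = A x - complex_of_real lam *s x"
  by (simp add: B_def shiftop_def)

lemma gen_eigenspace_eq: "gen_eigenspace A lam m = {v. (T ^^ m) v = 0}"
  by (simp add: gen_eigenspace_def T_def[abs_def])

lemma linear_B: "linear B"
  unfolding B_apply[abs_def] scaleR_vec_eq_complex_smult[symmetric]
  using linear_compose_sub[OF linear_A linear_scaleR] by simp

lemma linear_C: "linear C"
  unfolding C_def[abs_def] scaleR_vec_eq_complex_smult[symmetric]
  using linear_compose_add[OF linear_A linear_scaleR] by simp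

lemma linear_B_funpow: "linear (B ^^ k)"
  using linear_B by (rule real_vector.linear_funpow)

lemma linear_C_funpow: "linear (C ^^ k)"
  using linear_C by (rule real_vector.linear_funpow)

lemma linear_T: "Vector_Spaces.linear (*s) (*s) T"
  unfolding Vector_Spaces.linear_iff
  by (simp add: vec.vector_space_axioms T_def A_add A_scale algebra_simps vec.scale_right_diff_distrib)

lemma linear_T_funpow: "Vector_Spaces.linear (*s) (*s) (T ^^ k)"
  using linear_T by (rule vec.linear_funpow)

lemma C_B: "C (B x) = T x"
  by (simp add: B_apply C_def T_def A_add A_diff A_scale power2_eq_square algebra_simps)

lemma B_C: "B (C x) = T x"
  by (simp add: B_apply C_def T_def A_add A_diff A_scale power2_eq_square algebra_simps)

lemma B_C_funpow_commute: "(B ^^ j) ((C ^^ k) x) = (C ^^ k) ((B ^^ j) x)"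
  by (rule funpow_funpow_commute) (simp add: B_C C_B)

lemma T_funpow: "(T ^^ k) x = (C ^^ k) ((B ^^ k) x)"
proof -
  have "T = (\<lambda>x. C (B x))" by (simp add: C_B fun_eq_iff)
  then show ?thesis
    using funpow_comp_commuting[where f = C and g = B] by (simp add: B_C C_B)
qed

lemma funpow_B_C_imag_swap:
  assumes "cnj a = - a"
  shows "(B ^^ k) (a *s x) = ((-1) ^ k * a) *s (C ^^ k) x \<and>
    (C ^^ k) (a *s x) = ((-1) ^ k * a) *s (B ^^ k) x"
proof (induction k)
  case (Suc k)
  have "cnj ((-1) ^ k * a) = - ((-1) ^ k * a)"
    using assms by simp
  then have "B (((-1) ^ k * a) *s y) = - ((-1) ^ k * a) *s C y"
    and "C (((-1) ^ k * a) *s y) = - ((-1) ^ k * a) *s B y" for y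
    by (simp_all add: B_apply C_def A_add A_diff A_scale algebra_simps vec.scale_right_distrib
        vec.scale_right_diff_distrib vec.scale_scale)
  with Suc show ?case by simp
qed simp

lemma B_funpow_imag_eq_0_iff: "(B ^^ k) (\<i> *s x) = 0 \<longleftrightarrow> (C ^^ k) x = 0"
  using funpow_B_C_imag_swap[of \<i> k x] by simp

lemma C_funpow_imag_eq_0_iff: "(C ^^ k) (\<i> *s x) = 0 \<longleftrightarrow> (B ^^ k) x = 0"
  using funpow_B_C_imag_swap[of \<i> k x] by simp

lemma Re_l_B_adjoint: "Re (l (B x) y) = Re (l x (B y))"
  using l_A_commute[of x y] Re_l_commute[of x y] Re_l_commute[of x "A y"]
  by (simp add: B_apply l_diff_left l_scale_left l_diff_right l_scale_right)

lemma Re_l_C_adjoint: "Re (l (C x) y) = Re (l x (C y))"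
  using l_A_commute[of x y] Re_l_commute[of x y] Re_l_commute[of x "A y"]
  by (simp add: C_def l_add_left l_scale_left l_add_right l_scale_right)

lemma Re_l_B_funpow_adjoint: "Re (l ((B ^^ k) x) y) = Re (l x ((B ^^ k) y))"
proof (induction k arbitrary: y)
  case (Suc k)
  have "Re (l ((B ^^ Suc k) x) y) = Re (l ((B ^^ k) x) (B y))"
    by (simp add: Re_l_B_adjoint)
  also have "\<dots> = Re (l x ((B ^^ k) (B y)))"
    by (rule Suc)
  finally show ?case
    by (simp add: funpow_swap1)
qed simp

text \<open>Since \<open>C - B = 2 lam\<close>, both operators being adjoint for \<open>Re l\<close> gives
  \<open>2 lam Re (l x y) = Re (l x (C y)) - Re (l (B x) y)\<close>, which allows a double induction.\<close>

lemma Re_l_kernel_B_kernel_C: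
  assumes "(B ^^ j) x = 0" "(C ^^ k) y = 0"
  shows "Re (l x y) = 0"
  using assms
proof (induction j arbitrary: x k y)
  case (Suc j)
  note outer_IH = Suc.IH
  from Suc.prems(2) show ?case
  proof (induction k arbitrary: y)
    case (Suc k)
    have "(C ^^ k) (C y) = 0"
      using Suc.prems by (simp add: funpow_swap1)
    then have Cy: "Re (l x (C y)) = 0"
      by (rule Suc.IH)
    have "(B ^^ j) (B x) = 0"
      using \<open>(B ^^ Suc j) x = 0\<close> by (simp add: funpow_swap1)
    then have Bx: "Re (l (B x) y) = 0"
      using Suc.prems by (rule outer_IH)
    have "C x - B x = complex_of_real (2 * lam) *s x"
      by (simp add: C_def B_apply algebra_simps vec.scale_left_distrib[symmetric])
    then have "l (C x) y - l (B x) y = complex_of_real (2 * lam) * l x y"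
      by (metis l_diff_left l_scale_left)
    from arg_cong[where f = Re, OF this]
    have "Re (l (C x) y) - Re (l (B x) y) = 2 * lam * Re (l x y)"
      by simp
    with Cy Bx lam_pos show ?case
      by (simp add: Re_l_C_adjoint)
  qed simp
qed simp

lemma Im_l_kernel_B:
  assumes "(B ^^ j) x = 0" "(B ^^ j) y = 0"
  shows "Im (l x y) = 0"
proof -
  have "(C ^^ j) (\<i> *s y) = 0"
    using assms(2) by (simp add: C_funpow_imag_eq_0_iff)
  with assms(1) have "Re (l x (\<i> *s y)) = 0"
    by (rule Re_l_kernel_B_kernel_C)
  then show ?thesis
    by (simp add: l_scale_right)
qed

lemma B_funpow_kernel_closed:
  assumes "(B ^^ j) x = 0"
  shows "(B ^^ j) ((B ^^ k) x) = 0"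
proof -
  have "(B ^^ j) ((B ^^ k) x) = (B ^^ k) ((B ^^ j) x)"
    by (metis funpow_add add.commute comp_apply)
  with assms show ?thesis
    by (simp add: linear_0[OF linear_B_funpow])
qed

lemma l_B_adjoint_on_kernel:
  assumes "(B ^^ j) x = 0" "(B ^^ j) y = 0"
  shows "l (B x) y = l x (B y)"
proof -
  have "(B ^^ j) (B x) = 0" "(B ^^ j) (B y) = 0"
    using B_funpow_kernel_closed[of j _ 1] assms by simp_all
  then show ?thesis
    using Re_l_B_adjoint[of x y] Im_l_kernel_B assms by (simp add: complex_eq_iff)
qed

lemma l_B_funpow_on_kernel:
  assumes "(B ^^ j) x = 0" "(B ^^ j) y = 0"
  shows "l ((B ^^ a) x) ((B ^^ b) y) = l x ((B ^^ (a + b)) y)"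
proof (induction a arbitrary: b)
  case (Suc a)
  have "l ((B ^^ Suc a) x) ((B ^^ b) y) = l ((B ^^ a) x) (B ((B ^^ b) y))"
    using l_B_adjoint_on_kernel[OF B_funpow_kernel_closed B_funpow_kernel_closed, OF assms]
    by simp
  also have "\<dots> = l x ((B ^^ (a + Suc b)) y)"
    using Suc[of "Suc b"] by simp
  finally show ?case by simp
qed simp

text \<open>\<open>B\<close> is only real-linear, so its kernels and ranges stabilize after the real dimension
  \<open>DIM(complex ^ 'n) = 2 n\<close> rather than after \<open>n\<close>.\<close>

lemma kernel_B_funpow_stable: "(B ^^ m) x = 0 \<Longrightarrow> (B ^^ DIM(complex ^ 'n)) x = 0"
  by (rule eucl.kernel_funpow_stable[OF linear_B]) (simp_all add: eucl.dimension_def)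

lemma kernel_T_funpow_stable: "(T ^^ m) x = 0 \<Longrightarrow> (T ^^ CARD('n)) x = 0"
  by (rule vec.kernel_funpow_stable[OF linear_T]) (simp_all add: vec.dimension_def card_cart_basis)

lemma B_fitting_decomposition:
  obtains u y where "(B ^^ DIM(complex ^ 'n)) u = 0" "w = u + (B ^^ DIM(complex ^ 'n)) y"
proof (rule eucl.fitting_decomposition[OF linear_B])
  show "eucl.dimension TYPE(complex ^ 'n) \<le> DIM(complex ^ 'n)"
    by (simp add: eucl.dimension_def)
qed (rule that)

definition s :: nat
  where "s = (LEAST s. 0 < s \<and> gen_eigenspace A lam s = gen_eigenspace A lam CARD('n))"

lemma s_pos: "0 < s"
  and s_le_card: "s \<le> CARD('n)"
  and T_funpow_s_eq_0_iff: "(T ^^ s) x = 0 \<longleftrightarrow> (T ^^ CARD('n)) x = 0"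
proof -
  let ?P = "\<lambda>s. 0 < s \<and> gen_eigenspace A lam s = gen_eigenspace A lam CARD('n)"
  have "?P CARD('n)" by simp
  then have "?P s" and "s \<le> CARD('n)"
    unfolding s_def by (rule LeastI, rule Least_le)
  then show "0 < s" "s \<le> CARD('n)" "(T ^^ s) x = 0 \<longleftrightarrow> (T ^^ CARD('n)) x = 0"
    by (auto simp: gen_eigenspace_eq set_eq_iff)
qed

lemma T_funpow_swap: "(T ^^ k) x = (B ^^ k) ((C ^^ k) x)"
  by (simp add: T_funpow B_C_funpow_commute)

lemma C_funpow_inj_on_root_space:
  assumes "(B ^^ DIM(complex ^ 'n)) y = 0" "(C ^^ k) y = 0"
  shows "y = 0"
  using assms
proof (induction k arbitrary: y)
  case (Suc k)
  have "(B ^^ DIM(complex ^ 'n)) (C y) = 0"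
    using Suc.prems(1) B_C_funpow_commute[of _ 1] linear_0[OF linear_C] by simp
  moreover have "(C ^^ k) (C y) = 0"
    using Suc.prems(2) by (simp add: funpow_swap1)
  ultimately have "C y = 0"
    by (rule Suc.IH)
  then have "A y = - (complex_of_real lam *s y)"
    by (simp add: C_def eq_neg_iff_add_eq_0)
  then have "B y = (- 2 * lam) *\<^sub>R y"
    by (simp add: B_apply scaleR_vec_eq_complex_smult algebra_simps vec_eq_iff)
  then have "(B ^^ j) y = (- 2 * lam) ^ j *\<^sub>R y" for j
    by (induction j) (simp_all add: linear_scale[OF linear_B])
  with Suc.prems(1) lam_pos show ?case
    by simp
qed simp

lemma root_space_kernel_B_s:
  assumes "(B ^^ DIM(complex ^ 'n)) z = 0"
  shows "(B ^^ s) z = 0"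
proof (rule C_funpow_inj_on_root_space)
  show "(B ^^ DIM(complex ^ 'n)) ((B ^^ s) z) = 0"
    using assms by (rule B_funpow_kernel_closed)
  have "(T ^^ DIM(complex ^ 'n)) z = 0"
    using assms by (simp add: T_funpow linear_0[OF linear_C_funpow])
  then have "(T ^^ s) z = 0"
    by (simp add: T_funpow_s_eq_0_iff kernel_T_funpow_stable)
  then show "(C ^^ s) ((B ^^ s) z) = 0"
    by (simp add: T_funpow)
qed

lemma gen_eigenspace_decomposition:
  assumes "(T ^^ DIM(complex ^ 'n)) w = 0"
  obtains u u' where "(B ^^ DIM(complex ^ 'n)) u = 0" "(C ^^ DIM(complex ^ 'n)) u' = 0" "w = u + u'"
proof -
  let ?K = "DIM(complex ^ 'n)"
  obtain u y where u: "(B ^^ ?K) u = 0" and w: "w = u + (B ^^ ?K) y"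
    by (rule B_fitting_decomposition)
  have "(T ^^ ?K) u = 0"
    using u by (simp add: T_funpow linear_0[OF linear_C_funpow])
  with assms w have "(T ^^ ?K) ((B ^^ ?K) y) = 0"
    by (simp add: vec.linear_add[OF linear_T_funpow])
  then have "(B ^^ ?K) ((B ^^ ?K) ((C ^^ ?K) y)) = 0"
    by (simp add: T_funpow_swap B_C_funpow_commute)
  then have "(B ^^ (?K + ?K)) ((C ^^ ?K) y) = 0"
    by (simp only: funpow_add comp_apply)
  then have "(B ^^ ?K) ((C ^^ ?K) y) = 0"
    by (rule kernel_B_funpow_stable)
  then have "(C ^^ ?K) ((B ^^ ?K) y) = 0"
    by (simp add: B_C_funpow_commute)
  with u w that show thesis
    by blast
qed

lemma exists_gen_eigenvector_of_height_s:
  assumes "\<exists>v. v \<noteq> 0 \<and> A (A v) = complex_of_real (lam\<^sup>2) *s v"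
  obtains w where "(T ^^ CARD('n)) w = 0" "(T ^^ (s - 1)) w \<noteq> 0"
proof (cases "s = 1")
  case True
  obtain v where "v \<noteq> 0" "A (A v) = complex_of_real (lam\<^sup>2) *s v"
    using assms by blast
  then have "(T ^^ 1) v = 0"
    by (simp add: T_def)
  then have "(T ^^ CARD('n)) v = 0"
    by (rule kernel_T_funpow_stable)
  with \<open>v \<noteq> 0\<close> True that show thesis
    by simp
next
  case False
  with s_pos have "0 < s - 1" "s - 1 < s"
    by auto
  then have "gen_eigenspace A lam (s - 1) \<noteq> gen_eigenspace A lam CARD('n)"
    using not_less_Least[of "s - 1"
        "\<lambda>s. 0 < s \<and> gen_eigenspace A lam s = gen_eigenspace A lam CARD('n)"]
    unfolding s_def by blast
  moreover have "gen_eigenspace A lam (s - 1) \<subseteq> gen_eigenspace A lam CARD('n)"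
    by (auto simp: gen_eigenspace_eq intro: kernel_T_funpow_stable)
  ultimately show thesis
    using that by (auto simp: gen_eigenspace_eq)
qed

lemma exists_root_vector_of_height_s:
  assumes "\<exists>v. v \<noteq> 0 \<and> A (A v) = complex_of_real (lam\<^sup>2) *s v"
  obtains z where "(B ^^ DIM(complex ^ 'n)) z = 0" "(B ^^ (s - 1)) z \<noteq> 0"
proof (rule ccontr)
  let ?K = "DIM(complex ^ 'n)"
  assume "\<not> thesis"
  with that have height: "(B ^^ (s - 1)) z = 0" if "(B ^^ ?K) z = 0" for z
    using that by blast
  obtain w where w: "(T ^^ CARD('n)) w = 0" "(T ^^ (s - 1)) w \<noteq> 0"
    using assms by (rule exists_gen_eigenvector_of_height_s)
  have "(T ^^ ?K) w = 0"
    using funpow_eq_0_mono[where f = T, OF _ w(1)] by (simp add: T_def)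
  then obtain u u' where u: "(B ^^ ?K) u = 0" and u': "(C ^^ ?K) u' = 0" and "w = u + u'"
    by (rule gen_eigenspace_decomposition)
  have "(B ^^ ?K) (\<i> *s u') = 0"
    using u' by (simp add: B_funpow_imag_eq_0_iff)
  then have "(B ^^ (s - 1)) (\<i> *s u') = 0"
    by (rule height)
  then have "(C ^^ (s - 1)) u' = 0"
    by (simp add: B_funpow_imag_eq_0_iff)
  then have "(T ^^ (s - 1)) u' = 0"
    by (simp add: T_funpow_swap linear_0[OF linear_B_funpow])
  moreover have "(T ^^ (s - 1)) u = 0"
    using height[OF u] by (simp add: T_funpow linear_0[OF linear_C_funpow])
  ultimately have "(T ^^ (s - 1)) w = 0"
    using \<open>w = u + u'\<close> by (simp add: vec.linear_add[OF linear_T_funpow])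
  with w(2) show False ..
qed

lemma Re_l_nondegenerate_on_root_space:
  assumes z: "(B ^^ DIM(complex ^ 'n)) z = 0"
    and orth: "\<And>y. (B ^^ DIM(complex ^ 'n)) y = 0 \<Longrightarrow> Re (l z y) = 0"
  shows "z = 0"
proof -
  have Re_l: "Re (l z w) = 0" for w
  proof -
    obtain u y where u: "(B ^^ DIM(complex ^ 'n)) u = 0" and w: "w = u + (B ^^ DIM(complex ^ 'n)) y"
      by (rule B_fitting_decomposition)
    have "Re (l z ((B ^^ DIM(complex ^ 'n)) y)) = 0"
      using Re_l_B_funpow_adjoint[of "DIM(complex ^ 'n)" z y] z by simp
    with orth[OF u] w show ?thesis
      by (simp add: l_add_right)
  qed
  have "l z w = 0" for w
    using Re_l[of w] Re_l[of "\<i> *s w"] by (simp add: l_scale_right complex_eq_iff)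
  with nondegenerate show ?thesis
    unfolding nondegenerate_on_def by blast
qed

lemma exists_root_vector_l_nonzero:
  assumes "\<exists>v. v \<noteq> 0 \<and> A (A v) = complex_of_real (lam\<^sup>2) *s v"
  obtains v where "(B ^^ DIM(complex ^ 'n)) v = 0" "l ((B ^^ (s - 1)) v) v \<noteq> 0"
proof (rule ccontr)
  let ?K = "DIM(complex ^ 'n)" and ?N = "B ^^ (s - 1)"
  assume "\<not> thesis"
  with that have isotropic: "l (?N v) v = 0" if "(B ^^ ?K) v = 0" for v
    using that by blast
  obtain z where z: "(B ^^ ?K) z = 0" "?N z \<noteq> 0"
    using assms by (rule exists_root_vector_of_height_s)
  \<comment> \<open>polarization of the form \<open>v \<mapsto> l (?N v) v\<close>, which vanishes on the root space\<close>
  have "Re (l (?N z) y) = 0" if y: "(B ^^ ?K) y = 0" for y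
  proof -
    have "(B ^^ ?K) (z + y) = 0"
      using y z(1) by (simp add: linear_add[OF linear_B_funpow])
    then have "0 = l (?N (z + y)) (z + y)"
      using isotropic by simp
    also have "\<dots> = l (?N z) y + l (?N y) z"
      using isotropic[OF y] isotropic[OF z(1)]
      by (simp add: linear_add[OF linear_B_funpow] l_add_left l_add_right)
    finally have "Re (l (?N z) y) + Re (l (?N y) z) = 0"
      by (metis plus_complex.sel(1) zero_complex.sel(1))
    moreover have "Re (l (?N y) z) = Re (l (?N z) y)"
      using Re_l_B_funpow_adjoint Re_l_commute by metis
    ultimately show ?thesis
      by simp
  qed
  then have "?N z = 0"
    using Re_l_nondegenerate_on_root_space B_funpow_kernel_closed[OF z(1)] by blast
  with z(2) show False ..
qed

lemma A_invariant_span_B_orbit: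
  assumes "(B ^^ m) v = 0"
  shows "A ` vec.span ((\<lambda>k. (B ^^ k) v) ` {..<m}) \<subseteq> vec.span ((\<lambda>k. (B ^^ k) v) ` {..<m})"
    (is "A ` ?V \<subseteq> ?V")
proof -
  have orbit: "(B ^^ k) v \<in> ?V" for k
  proof (cases "k < m")
    case False
    then have "(B ^^ k) v = (B ^^ (k - m)) ((B ^^ m) v)"
      by (metis funpow_add comp_apply le_add_diff_inverse2 not_less)
    with assms show ?thesis
      by (simp add: linear_0[OF linear_B_funpow] vec.span_zero)
  qed (simp add: vec.span_base)
  have "vec.subspace {y. A y \<in> ?V}"
    unfolding vec.subspace_def by (simp add: A_add A_scale vec.span_zero vec.span_add vec.span_scale)
  moreover have "A ((B ^^ k) v) \<in> ?V" for k
  proof -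
    have "A ((B ^^ k) v) = (B ^^ Suc k) v + complex_of_real lam *s (B ^^ k) v"
      by (simp add: B_apply)
    then show ?thesis
      using orbit[of k] orbit[of "Suc k"] by (simp add: vec.span_add vec.span_scale)
  qed
  ultimately show ?thesis
    using vec.span_minimal[of "(\<lambda>k. (B ^^ k) v) ` {..<m}" "{y. A y \<in> ?V}"] by auto
qed

lemma exists_nondegenerate_B_orbit:
  assumes "\<exists>v. v \<noteq> 0 \<and> A (A v) = complex_of_real (lam\<^sup>2) *s v"
  obtains v where "(T ^^ CARD('n)) v = 0" "(B ^^ s) v = 0"
    and "vec.dim (vec.span ((\<lambda>k. (B ^^ k) v) ` {..<s})) = s"
    and "A ` vec.span ((\<lambda>k. (B ^^ k) v) ` {..<s}) \<subseteq> vec.span ((\<lambda>k. (B ^^ k) v) ` {..<s})"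
    and "nondegenerate_on l (vec.span ((\<lambda>k. (B ^^ k) v) ` {..<s}))"
proof -
  obtain v where root: "(B ^^ DIM(complex ^ 'n)) v = 0" and top: "l ((B ^^ (s - 1)) v) v \<noteq> 0"
    using assms by (rule exists_root_vector_l_nonzero)
  have Bs: "(B ^^ s) v = 0"
    using root by (rule root_space_kernel_B_s)
  have gram: "l ((B ^^ j) v) ((B ^^ k) v) = l v ((B ^^ (j + k)) v)" for j k
    using root root by (rule l_B_funpow_on_kernel)
  have below: "l ((B ^^ j) v) ((B ^^ k) v) = 0" if "s \<le> j + k" for j k
    using gram funpow_eq_0_mono[where f = B, OF linear_0[OF linear_B] Bs that] by simp
  have antidiag: "l ((B ^^ j) v) ((B ^^ (s - 1 - j)) v) \<noteq> 0" if "j < s" for j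
    using gram[of j "s - 1 - j"] gram[of "s - 1" 0] l_cnj_commute[of v] top that by simp
  have "(T ^^ CARD('n)) v = 0"
    using funpow_eq_0_mono[where f = B, OF linear_0[OF linear_B] Bs s_le_card]
    by (simp add: T_funpow linear_0[OF linear_C_funpow])
  with Bs that show thesis
    using antitriangular_gram_dim[where x = "\<lambda>k. (B ^^ k) v", OF below antidiag]
      antitriangular_gram_nondegenerate[where x = "\<lambda>k. (B ^^ k) v", OF below antidiag]
      A_invariant_span_B_orbit[OF Bs] by blast
qed

end

theorem mainTheorem9:
  fixes l :: "complex^'n \<Rightarrow> complex^'n \<Rightarrow> complex"
    and A :: "complex^'n \<Rightarrow> complex^'n"
    and lam :: real
  assumes herm: "hermitian_form l"
    and nondeg: "nondegenerate_on l UNIV"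
    and anti: "antilinear A"
    and sa: "self_adjoint_wrt l A"
    and lam_pos: "lam > 0"
    and eig: "\<exists>v. v \<noteq> 0 \<and> A (A v) = complex_of_real (lam^2) *s v"
  shows "let s1 = (LEAST s. s > 0 \<and> gen_eigenspace A lam s = gen_eigenspace A lam CARD('n))
         in \<exists>v \<in> gen_eigenspace A lam CARD('n).
              (shiftop A lam ^^ s1) v = 0 \<and>
              (let V = vec.span {(shiftop A lam ^^ k) v | k. k < s1}
               in vec.dim V = s1 \<and> A ` V \<subseteq> V \<and> nondegenerate_on l V)"
proof -
  interpret selfadjoint_antilinear l A lam
    using assms by unfold_locales
  obtain v where "(T ^^ CARD('n)) v = 0" "(B ^^ s) v = 0"
    and "vec.dim (vec.span ((\<lambda>k. (B ^^ k) v) ` {..<s})) = s"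
    and "A ` vec.span ((\<lambda>k. (B ^^ k) v) ` {..<s}) \<subseteq> vec.span ((\<lambda>k. (B ^^ k) v) ` {..<s})"
    and "nondegenerate_on l (vec.span ((\<lambda>k. (B ^^ k) v) ` {..<s}))"
    using eig by (rule exists_nondegenerate_B_orbit)
  moreover have "{(shiftop A lam ^^ k) v | k. k < s} = (\<lambda>k. (B ^^ k) v) ` {..<s}"
    by (auto simp: B_def)
  ultimately show ?thesis
    unfolding Let_def s_def[symmetric]
    by (intro bexI[of _ v]) (simp_all add: B_def gen_eigenspace_eq)
qed

end
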